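(* Assume $L/F$ is ramified. If $\Phi\in\pi_{\tau,\chi}^{K_n}$ with $n\ge1$, then $\operatorname{supp}(\Phi)\subset\mathfrak p_L^{c-n}$ and $\Phi$ is constant on cosets of $\mathfrak p_L^{c+n-1}$.
   Context: $F$ is a $p$-adic field with $p\ne2$, ring of integers $\mathcal O$ with maximal ideal $\mathfrak p$, residue field of order $q$. $L/F$ is a quadratic extension with ring of integers $\mathcal O_L$, maximal ideal $\mathfrak p_L$, conjugation $x\mapsto\overline x$, norm $N:L\to F$, $L^1=\ker N$; $\omega$ is the nontrivial character of $F^\times/N(L^\times)$. $\chi$ is a character of $L^\times$ not factoring through $N$. $\tau$ is a nontrivial additive character of $F$ with conductor $\mathfrak p^c$, i.e. $\tau$ is trivial on $\mathfrak p^m$ iff $m\ge c$. Put $\langle x,y\rangle=\tau(\operatorname{tr}_{L/F}(xy))$ and $\widehat\Phi(x)=\int_L\Phi(y)\langle x,y\rangle\,dy$ for Schwartz functions $\Phi$ on $L$, with Haar measure normalized so that $\widehat{\widehat\Phi}(x)=\Phi(-x)$. $\mathcal S(L)_\chi$ is the space of Schwartz functions with $\Phi(xy)=\chi(y)^{-1}\Phi(x)$ for $y\in L^1$. $G_+=\{g\in GL_2(F):\det g\in N(L^\times)\}$, and $\pi_{\tau,\chi}$ is the irreducible representation of $G_+$ on $\mathcal S(L)_\chi$ satisfying $\pi_{\tau,\chi}\begin{pmatrix}1&u\\0&1\end{pmatrix}\Phi(x)=\tau(uN(x))\Phi(x)$, $\pi_{\tau,\chi}\begin{pmatrix}a&0\\0&a^{-1}\end{pmatrix}\Phi(x)=\omega(a)|a|_L^{1/2}\Phi(ax)$,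 $\pi_{\tau,\chi}\begin{pmatrix}0&1\\-1&0\end{pmatrix}\Phi(x)=\gamma\widehat\Phi(\overline x)$ for some complex $\gamma$ with $|\gamma|=1$. $K_n$ is the principal congruence subgroup of $GL_2(F)$ of level $n$ (contained in $G_+$ for $n\ge1$). *)

theory Defs
  imports Complex_Main
begin

text \<open>The quadratic extension L is modelled by a type 'l (a field) carrying
 a discrete valuation v (the normalised valuation of L) and the conjugation sigma,
 a field automorphism of order exactly 2.  F is the fixed field of sigma.
 A value v 0 is irrelevant: membership in ideals is always written with x = 0 as a separate case.\<close>

definition pL :: "('l::field \<Rightarrow> int) \<Rightarrow> int \<Rightarrow> 'l set" where
  "pL v k = {x. x = 0 \<or> k \<le> v x}"

definition discrete_valuation :: "('l::field \<Rightarrow> int) \<Rightarrow> bool" where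
  "discrete_valuation v \<longleftrightarrow>
     (\<forall>x y. x \<noteq> 0 \<longrightarrow> y \<noteq> 0 \<longrightarrow> v (x * y) = v x + v y) \<and>
     (\<forall>x y. x \<noteq> 0 \<longrightarrow> y \<noteq> 0 \<longrightarrow> x + y \<noteq> 0 \<longrightarrow> min (v x) (v y) \<le> v (x + y)) \<and>
     (\<exists>\<pi>. \<pi> \<noteq> 0 \<and> v \<pi> = 1)"

definition complete_valuation :: "('l::field \<Rightarrow> int) \<Rightarrow> bool" where
  "complete_valuation v \<longleftrightarrow>
     (\<forall>s::nat \<Rightarrow> 'l. (\<forall>k. \<exists>N. \<forall>m\<ge>N. \<forall>n\<ge>N. s m - s n \<in> pL v k) \<longrightarrow>
        (\<exists>l. \<forall>k. \<exists>N. \<forall>n\<ge>N. s n - l \<in> pL v k))"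

definition residue_field :: "('l::field \<Rightarrow> int) \<Rightarrow> 'l set set" where
  "residue_field v = (\<lambda>x. {y \<in> pL v 0. x - y \<in> pL v 1}) ` pL v 0"

definition qL :: "('l::field \<Rightarrow> int) \<Rightarrow> nat" where
  "qL v = card (residue_field v)"

definition padic_field :: "('l::field \<Rightarrow> int) \<Rightarrow> bool" where
  "padic_field v \<longleftrightarrow> (\<forall>n::nat. 0 < n \<longrightarrow> of_nat n \<noteq> (0::'l)) \<and>
     discrete_valuation v \<and> complete_valuation v \<and> finite (residue_field v)"

definition quadratic_conj :: "('l::field \<Rightarrow> 'l) \<Rightarrow> bool" where
  "quadratic_conj \<sigma> \<longleftrightarrow> (\<forall>x y. \<sigma> (x + y) = \<sigma> x + \<sigma> y) \<and> (\<forall>x y. \<sigma> (x * y) = \<sigma> x * \<sigma> y) \<and>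
     (\<forall>x. \<sigma> (\<sigma> x) = x) \<and> (\<exists>x. \<sigma> x \<noteq> x)"

definition Fld :: "('l \<Rightarrow> 'l) \<Rightarrow> 'l set" where
  "Fld \<sigma> = {a. \<sigma> a = a}"

definition Nm :: "('l::field \<Rightarrow> 'l) \<Rightarrow> 'l \<Rightarrow> 'l" where
  "Nm \<sigma> x = x * \<sigma> x"

definition tr :: "('l::field \<Rightarrow> 'l) \<Rightarrow> 'l \<Rightarrow> 'l" where
  "tr \<sigma> x = x + \<sigma> x"

definition norms :: "('l::field \<Rightarrow> 'l) \<Rightarrow> 'l set" where
  "norms \<sigma> = {Nm \<sigma> x | x. x \<noteq> 0}"

text \<open>L/F ramified: v_L(F^x) = 2Z (otherwise v_L(F^x) = Z).\<close>
definition ramified :: "('l::field \<Rightarrow> int) \<Rightarrow> ('l \<Rightarrow> 'l) \<Rightarrow> bool" where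
  "ramified v \<sigma> \<longleftrightarrow> (\<forall>a \<in> Fld \<sigma>. a \<noteq> 0 \<longrightarrow> even (v a))"

definition ram_index :: "('l::field \<Rightarrow> int) \<Rightarrow> ('l \<Rightarrow> 'l) \<Rightarrow> int" where
  "ram_index v \<sigma> = (if ramified v \<sigma> then 2 else 1)"

definition pF :: "('l::field \<Rightarrow> int) \<Rightarrow> ('l \<Rightarrow> 'l) \<Rightarrow> int \<Rightarrow> 'l set" where
  "pF v \<sigma> m = {a \<in> Fld \<sigma>. a = 0 \<or> ram_index v \<sigma> * m \<le> v a}"

definition add_char_conductor :: "('l::field \<Rightarrow> int) \<Rightarrow> ('l \<Rightarrow> 'l) \<Rightarrow> ('l \<Rightarrow> complex) \<Rightarrow> int \<Rightarrow> bool" where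
  "add_char_conductor v \<sigma> \<tau> c \<longleftrightarrow>
     (\<forall>a \<in> Fld \<sigma>. \<forall>b \<in> Fld \<sigma>. \<tau> (a + b) = \<tau> a * \<tau> b) \<and> (\<forall>a \<in> Fld \<sigma>. \<tau> a \<noteq> 0) \<and>
     (\<forall>m. (\<forall>a \<in> pF v \<sigma> m. \<tau> a = 1) \<longleftrightarrow> c \<le> m)"

definition mult_char :: "('l::field \<Rightarrow> int) \<Rightarrow> ('l \<Rightarrow> complex) \<Rightarrow> bool" where
  "mult_char v \<chi> \<longleftrightarrow>
     (\<forall>x y. x \<noteq> 0 \<longrightarrow> y \<noteq> 0 \<longrightarrow> \<chi> (x * y) = \<chi> x * \<chi> y) \<and> (\<forall>x. x \<noteq> 0 \<longrightarrow> \<chi> x \<noteq> 0) \<and>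
     (\<exists>k \<ge> 1. \<forall>x. x - 1 \<in> pL v k \<longrightarrow> \<chi> x = 1)"

definition factors_through_norm :: "('l::field \<Rightarrow> 'l) \<Rightarrow> ('l \<Rightarrow> complex) \<Rightarrow> bool" where
  "factors_through_norm \<sigma> \<chi> \<longleftrightarrow> (\<exists>\<psi>. \<forall>x. x \<noteq> 0 \<longrightarrow> \<chi> x = \<psi> (Nm \<sigma> x))"

text \<open>omega: the nontrivial character of F^x / N(L^x) (a group of order 2).\<close>
definition omega :: "('l::field \<Rightarrow> 'l) \<Rightarrow> 'l \<Rightarrow> complex" where
  "omega \<sigma> a = (if a \<in> norms \<sigma> then 1 else -1)"

definition absL :: "('l::field \<Rightarrow> int) \<Rightarrow> 'l \<Rightarrow> real" where
  "absL v x = (if x = 0 then 0 else real (qL v) powr (- real_of_int (v x)))"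

definition schwartz :: "('l::field \<Rightarrow> int) \<Rightarrow> ('l \<Rightarrow> complex) \<Rightarrow> bool" where
  "schwartz v \<Phi> \<longleftrightarrow> (\<exists>k. \<forall>x y. x - y \<in> pL v k \<longrightarrow> \<Phi> x = \<Phi> y) \<and>
                      (\<exists>m. \<forall>x. \<Phi> x \<noteq> 0 \<longrightarrow> x \<in> pL v m)"

definition haar_integral :: "('l::field \<Rightarrow> int) \<Rightarrow> (('l \<Rightarrow> complex) \<Rightarrow> complex) \<Rightarrow> bool" where
  "haar_integral v I \<longleftrightarrow>
     (\<forall>\<Phi> \<Psi>. schwartz v \<Phi> \<longrightarrow> schwartz v \<Psi> \<longrightarrow> I (\<lambda>x. \<Phi> x + \<Psi> x) = I \<Phi> + I \<Psi>) \<and>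
     (\<forall>z \<Phi>. schwartz v \<Phi> \<longrightarrow> I (\<lambda>x. z * \<Phi> x) = z * I \<Phi>) \<and>
     (\<forall>\<Phi> a. schwartz v \<Phi> \<longrightarrow> I (\<lambda>x. \<Phi> (x + a)) = I \<Phi>) \<and>
     (\<forall>\<Phi>. schwartz v \<Phi> \<longrightarrow> (\<forall>x. Im (\<Phi> x) = 0 \<and> 0 \<le> Re (\<Phi> x)) \<longrightarrow>
            Im (I \<Phi>) = 0 \<and> 0 \<le> Re (I \<Phi>)) \<and>
     (\<exists>\<Phi>. schwartz v \<Phi> \<and> I \<Phi> \<noteq> 0)"

definition fourier :: "('l::field \<Rightarrow> 'l) \<Rightarrow> ('l \<Rightarrow> complex) \<Rightarrow> (('l \<Rightarrow> complex) \<Rightarrow> complex)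
    \<Rightarrow> ('l \<Rightarrow> complex) \<Rightarrow> 'l \<Rightarrow> complex" where
  "fourier \<sigma> \<tau> I \<Phi> x = I (\<lambda>y. \<Phi> y * \<tau> (tr \<sigma> (x * y)))"

definition S_chi :: "('l::field \<Rightarrow> int) \<Rightarrow> ('l \<Rightarrow> 'l) \<Rightarrow> ('l \<Rightarrow> complex) \<Rightarrow> ('l \<Rightarrow> complex) set" where
  "S_chi v \<sigma> \<chi> = {\<Phi>. schwartz v \<Phi> \<and> (\<forall>x y. Nm \<sigma> y = 1 \<longrightarrow> \<Phi> (x * y) = inverse (\<chi> y) * \<Phi> x)}"

text \<open>2x2 matrices (a b; c d) as quadruples (a, b, c, d).\<close>
type_synonym 'a mat2 = "'a \<times> 'a \<times> 'a \<times> 'a"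

fun mmul :: "'a::ring mat2 \<Rightarrow> 'a mat2 \<Rightarrow> 'a mat2" where
  "mmul (a, b, c, d) (a', b', c', d') = (a*a' + b*c', a*b' + b*d', c*a' + d*c', c*b' + d*d')"

fun mdet :: "'a::comm_ring mat2 \<Rightarrow> 'a" where
  "mdet (a, b, c, d) = a * d - b * c"

definition Gplus :: "('l::field \<Rightarrow> 'l) \<Rightarrow> 'l mat2 set" where
  "Gplus \<sigma> = {(a, b, c, d). a \<in> Fld \<sigma> \<and> b \<in> Fld \<sigma> \<and> c \<in> Fld \<sigma> \<and> d \<in> Fld \<sigma> \<and>
                            mdet (a, b, c, d) \<in> norms \<sigma>}"

definition Kcong :: "('l::field \<Rightarrow> int) \<Rightarrow> ('l \<Rightarrow> 'l) \<Rightarrow> int \<Rightarrow> 'l mat2 set" where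
  "Kcong v \<sigma> n = {(a, b, c, d). a - 1 \<in> pF v \<sigma> n \<and> b \<in> pF v \<sigma> n \<and> c \<in> pF v \<sigma> n \<and> d - 1 \<in> pF v \<sigma> n \<and>
       a \<in> pF v \<sigma> 0 \<and> d \<in> pF v \<sigma> 0 \<and> mdet (a, b, c, d) \<noteq> 0 \<and>
       inverse (mdet (a, b, c, d)) \<in> pF v \<sigma> 0}"

definition invariant_subspace :: "('l mat2 set) \<Rightarrow> ('l mat2 \<Rightarrow> ('l \<Rightarrow> complex) \<Rightarrow> ('l \<Rightarrow> complex))
     \<Rightarrow> ('l \<Rightarrow> complex) set \<Rightarrow> ('l \<Rightarrow> complex) set \<Rightarrow> bool" where
  "invariant_subspace G \<pi> S V \<longleftrightarrow> V \<subseteq> S \<and> (\<lambda>_. 0) \<in> V \<and>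
     (\<forall>\<Phi>\<in>V. \<forall>\<Psi>\<in>V. (\<lambda>x. \<Phi> x + \<Psi> x) \<in> V) \<and> (\<forall>z. \<forall>\<Phi>\<in>V. (\<lambda>x. z * \<Phi> x) \<in> V) \<and>
     (\<forall>g\<in>G. \<forall>\<Phi>\<in>V. \<pi> g \<Phi> \<in> V)"

definition irred_rep :: "('l::field mat2 set) \<Rightarrow> ('l mat2 \<Rightarrow> ('l \<Rightarrow> complex) \<Rightarrow> ('l \<Rightarrow> complex))
     \<Rightarrow> ('l \<Rightarrow> complex) set \<Rightarrow> bool" where
  "irred_rep G \<pi> S \<longleftrightarrow>
     (\<forall>g\<in>G. \<forall>\<Phi>\<in>S. \<pi> g \<Phi> \<in> S) \<and>
     (\<forall>g\<in>G. \<forall>\<Phi>\<in>S. \<forall>\<Psi>\<in>S. \<pi> g (\<lambda>x. \<Phi> x + \<Psi> x) = (\<lambda>x. \<pi> g \<Phi> x + \<pi> g \<Psi> x)) \<and>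
     (\<forall>g\<in>G. \<forall>z. \<forall>\<Phi>\<in>S. \<pi> g (\<lambda>x. z * \<Phi> x) = (\<lambda>x. z * \<pi> g \<Phi> x)) \<and>
     (\<forall>\<Phi>\<in>S. \<pi> (1, 0, 0, 1) \<Phi> = \<Phi>) \<and>
     (\<forall>g\<in>G. \<forall>h\<in>G. \<forall>\<Phi>\<in>S. \<pi> (mmul g h) \<Phi> = \<pi> g (\<pi> h \<Phi>)) \<and>
     S \<noteq> {\<lambda>_. 0} \<and>
     (\<forall>V. invariant_subspace G \<pi> S V \<longrightarrow> V = {\<lambda>_. 0} \<or> V = S)"

definition weil_formulas :: "('l::field \<Rightarrow> int) \<Rightarrow> ('l \<Rightarrow> 'l) \<Rightarrow> ('l \<Rightarrow> complex) \<Rightarrow> (('l \<Rightarrow> complex) \<Rightarrow> complex)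
     \<Rightarrow> ('l \<Rightarrow> complex) \<Rightarrow> ('l mat2 \<Rightarrow> ('l \<Rightarrow> complex) \<Rightarrow> ('l \<Rightarrow> complex)) \<Rightarrow> bool" where
  "weil_formulas v \<sigma> \<tau> I \<chi> \<pi> \<longleftrightarrow>
     (\<forall>u \<in> Fld \<sigma>. \<forall>\<Phi> \<in> S_chi v \<sigma> \<chi>. \<pi> (1, u, 0, 1) \<Phi> = (\<lambda>x. \<tau> (u * Nm \<sigma> x) * \<Phi> x)) \<and>
     (\<forall>a \<in> Fld \<sigma>. a \<noteq> 0 \<longrightarrow> (\<forall>\<Phi> \<in> S_chi v \<sigma> \<chi>. \<pi> (a, 0, 0, inverse a) \<Phi> =
         (\<lambda>x. omega \<sigma> a * complex_of_real (sqrt (absL v a)) * \<Phi> (a * x)))) \<and>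
     (\<exists>\<gamma>. cmod \<gamma> = 1 \<and> (\<forall>\<Phi> \<in> S_chi v \<sigma> \<chi>. \<pi> (0, 1, -1, 0) \<Phi> = (\<lambda>x. \<gamma> * fourier \<sigma> \<tau> I \<Phi> (\<sigma> x))))"

end

theory Submission
  imports Defs
begin

text \<open>
  Invariance of Phi under the upper unipotents (1, u; 0, 1), u in p^n, of K_n means
  tau(u N(x)) = 1 for all such u wherever Phi(x) is nonzero.  In the ramified case the
  conjugation preserves v_L, so v_L(N x) = 2 v_L(x), and the conductor forces v_L(x) >= c - n.
  Conjugation by the Weyl element w carries the lower unipotents of K_n to upper ones, so
  pi(w) Phi = gamma (hat Phi o conj) obeys the same bound: hat Phi is supported in p_L^(c-n).
  By Fourier inversion Phi is in turn the transform of hat Phi, and moving x by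
  a in p_L^(c+n-1) multiplies the integrand by tau(tr(a y)) with a y in p_L^(2c-1).
  That factor is 1 because tr(p_L^(2c-1)) lies in p^c: elements of F have even v_L-valuation.
\<close>

lemma irred_rep_closed: "irred_rep G \<pi> S \<Longrightarrow> g \<in> G \<Longrightarrow> \<Phi> \<in> S \<Longrightarrow> \<pi> g \<Phi> \<in> S"
  by (simp add: irred_rep_def)

lemma irred_rep_mmul:
  "irred_rep G \<pi> S \<Longrightarrow> g \<in> G \<Longrightarrow> h \<in> G \<Longrightarrow> \<Phi> \<in> S \<Longrightarrow> \<pi> (mmul g h) \<Phi> = \<pi> g (\<pi> h \<Phi>)"
  by (simp add: irred_rep_def)

locale valued_field =
  fixes v :: "'l::field \<Rightarrow> int"
  assumes discrete: "discrete_valuation v"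
begin

lemma valuation_mult: "x \<noteq> 0 \<Longrightarrow> y \<noteq> 0 \<Longrightarrow> v (x * y) = v x + v y"
  using discrete unfolding discrete_valuation_def by blast

lemma valuation_add: "x \<noteq> 0 \<Longrightarrow> y \<noteq> 0 \<Longrightarrow> x + y \<noteq> 0 \<Longrightarrow> min (v x) (v y) \<le> v (x + y)"
  using discrete unfolding discrete_valuation_def by blast

lemma uniformizer_exists: obtains p where "p \<noteq> 0" "v p = 1"
  using discrete unfolding discrete_valuation_def by blast

lemma valuation_one [simp]: "v 1 = 0"
  using valuation_mult[of 1 1] by simp

lemma valuation_uminus [simp]: "v (- x) = v x"
proof -
  have "v (- 1) = 0"
    using valuation_mult[of "- 1" "- 1"] by simp
  then show ?thesis
    using valuation_mult[of "- 1" x] by (cases "x = 0") simp_all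
qed

lemma valuation_divide: "x \<noteq> 0 \<Longrightarrow> y \<noteq> 0 \<Longrightarrow> v (x / y) = v x - v y"
  using valuation_mult[of "x / y" y] by simp

lemma valuation_add_eq_min:
  assumes "x \<noteq> 0" "y \<noteq> 0" "v x \<noteq> v y"
  shows "x + y \<noteq> 0 \<and> v (x + y) = min (v x) (v y)"
proof -
  have "x + y \<noteq> 0"
    using assms by (metis add.inverse_unique valuation_uminus)
  moreover have "min (v (x + y)) (v y) \<le> v x" and "min (v (x + y)) (v x) \<le> v y"
    using valuation_add[of "x + y" "- y"] valuation_add[of "x + y" "- x"] assms calculation
    by (simp_all add: add.commute)
  ultimately show ?thesis
    using valuation_add[of x y] assms by linarith
qed

lemma pL_uminus: "x \<in> pL v k \<Longrightarrow> - x \<in> pL v k"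
  by (simp add: pL_def)

lemma pL_mult: "x \<in> pL v j \<Longrightarrow> y \<in> pL v k \<Longrightarrow> x * y \<in> pL v (j + k)"
  by (cases "x = 0 \<or> y = 0") (auto simp: pL_def valuation_mult)

lemma pL_add: "x \<in> pL v k \<Longrightarrow> y \<in> pL v k \<Longrightarrow> x + y \<in> pL v k"
  unfolding pL_def using valuation_add[of x y] by fastforce

end

locale conjugation =
  fixes \<sigma> :: "'l::field \<Rightarrow> 'l"
  assumes quadratic: "quadratic_conj \<sigma>"
begin

lemma conj_add: "\<sigma> (x + y) = \<sigma> x + \<sigma> y"
  using quadratic unfolding quadratic_conj_def by blast

lemma conj_mult: "\<sigma> (x * y) = \<sigma> x * \<sigma> y"
  using quadratic unfolding quadratic_conj_def by blast

lemma conj_conj [simp]: "\<sigma> (\<sigma> x) = x"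
  using quadratic unfolding quadratic_conj_def by blast

lemma conj_zero [simp]: "\<sigma> 0 = 0"
  using conj_add[of 0 0] by (metis add_0 add_cancel_left_right)

lemma conj_eq_0_iff [simp]: "\<sigma> x = 0 \<longleftrightarrow> x = 0"
  by (metis conj_conj conj_zero)

lemma conj_one [simp]: "\<sigma> 1 = 1"
  using conj_mult[of 1 1] by (metis conj_eq_0_iff mult_cancel_left1)

lemma conj_uminus [simp]: "\<sigma> (- x) = - \<sigma> x"
  using conj_add[of x "- x"] by (metis add.inverse_unique add.right_inverse conj_zero)

lemma conj_inverse: "\<sigma> (inverse x) = inverse (\<sigma> x)"
  using conj_mult[of x "inverse x"] by (cases "x = 0") (simp_all add: inverse_unique)

lemma Fld_uminus: "a \<in> Fld \<sigma> \<Longrightarrow> - a \<in> Fld \<sigma>"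
  by (simp add: Fld_def)

lemma Fld_divide: "a \<in> Fld \<sigma> \<Longrightarrow> b \<in> Fld \<sigma> \<Longrightarrow> a / b \<in> Fld \<sigma>"
  by (simp add: Fld_def divide_inverse conj_mult conj_inverse)

lemma Nm_in_Fld: "Nm \<sigma> x \<in> Fld \<sigma>"
  by (simp add: Fld_def Nm_def conj_mult mult.commute)

lemma tr_in_Fld: "tr \<sigma> x \<in> Fld \<sigma>"
  by (simp add: Fld_def tr_def conj_add add.commute)

lemma tr_add: "tr \<sigma> (x + y) = tr \<sigma> x + tr \<sigma> y"
  by (simp add: tr_def conj_add algebra_simps)

lemma one_in_norms: "1 \<in> norms \<sigma>"
  unfolding norms_def Nm_def by (rule CollectI, rule exI[of _ 1]) simp

lemma upper_unipotent_in_Gplus: "u \<in> Fld \<sigma> \<Longrightarrow> (1, u, 0, 1) \<in> Gplus \<sigma>"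
  by (simp add: Gplus_def Fld_def one_in_norms)

lemma lower_unipotent_in_Gplus: "u \<in> Fld \<sigma> \<Longrightarrow> (1, 0, u, 1) \<in> Gplus \<sigma>"
  by (simp add: Gplus_def Fld_def one_in_norms)

lemma weyl_in_Gplus: "(0, 1, - 1, 0) \<in> Gplus \<sigma>"
  by (simp add: Gplus_def Fld_def one_in_norms)

end

locale valued_conjugation = valued_field v + conjugation \<sigma>
  for v :: "'l::field \<Rightarrow> int" and \<sigma> :: "'l \<Rightarrow> 'l"
begin

lemma pF_subset_Fld: "pF v \<sigma> m \<subseteq> Fld \<sigma>"
  by (simp add: pF_def)

lemma pF_uminus: "u \<in> pF v \<sigma> n \<Longrightarrow> - u \<in> pF v \<sigma> n"
  by (simp add: pF_def Fld_def)

lemma zero_in_pF: "0 \<in> pF v \<sigma> m"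
  by (simp add: pF_def Fld_def)

lemma one_in_pF_0: "1 \<in> pF v \<sigma> 0"
  by (simp add: pF_def Fld_def)

lemma upper_unipotent_in_Kcong: "u \<in> pF v \<sigma> n \<Longrightarrow> (1, u, 0, 1) \<in> Kcong v \<sigma> n"
  unfolding Kcong_def using zero_in_pF one_in_pF_0 by simp

lemma lower_unipotent_in_Kcong: "u \<in> pF v \<sigma> n \<Longrightarrow> (1, 0, u, 1) \<in> Kcong v \<sigma> n"
  unfolding Kcong_def using zero_in_pF one_in_pF_0 by simp

lemma weyl_image_upper_unipotent_invariant:
  assumes rep: "irred_rep (Gplus \<sigma>) \<pi> S" and "\<Phi> \<in> S"
    and fixed: "\<forall>g \<in> Kcong v \<sigma> n. \<pi> g \<Phi> = \<Phi>" and u: "u \<in> pF v \<sigma> n"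
  shows "\<pi> (1, u, 0, 1) (\<pi> (0, 1, - 1, 0) \<Phi>) = \<pi> (0, 1, - 1, 0) \<Phi>"
proof -
  note mult = irred_rep_mmul[OF rep _ _ \<open>\<Phi> \<in> S\<close>]
  have "u \<in> Fld \<sigma>"
    using u pF_subset_Fld by blast
  then have G: "(1, u, 0, 1) \<in> Gplus \<sigma>" "(1, 0, - u, 1) \<in> Gplus \<sigma>"
    by (simp_all add: upper_unipotent_in_Gplus lower_unipotent_in_Gplus Fld_uminus)
  have "\<pi> (1, 0, - u, 1) \<Phi> = \<Phi>"
    using fixed lower_unipotent_in_Kcong[OF pF_uminus[OF u]] by blast
  moreover have "mmul (1, u, 0, 1) (0, 1, - 1, 0) = mmul (0, 1, - 1, 0) (1, 0, - u, 1)"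
    by simp
  ultimately show ?thesis
    using mult G weyl_in_Gplus by metis
qed

end

locale ramified_extension = valued_conjugation +
  assumes ramified: "ramified v \<sigma>"
begin

lemma even_valuation_Fld: "a \<in> Fld \<sigma> \<Longrightarrow> a \<noteq> 0 \<Longrightarrow> even (v a)"
  using ramified unfolding ramified_def by blast

lemma even_valuation_if_conj_valuation_differs:
  assumes "z \<noteq> 0" "v (\<sigma> z) \<noteq> v z"
  shows "even (v z)"
proof -
  have "even (v (Nm \<sigma> z))"
    using assms by (intro even_valuation_Fld Nm_in_Fld) (simp add: Nm_def)
  then have sum: "even (v z + v (\<sigma> z))"
    using assms by (simp add: Nm_def valuation_mult)
  have "tr \<sigma> z \<noteq> 0" and "v (tr \<sigma> z) = min (v z) (v (\<sigma> z))"
    using valuation_add_eq_min[of z "\<sigma> z"] assms by (auto simp: tr_def)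
  then have "even (min (v z) (v (\<sigma> z)))"
    using even_valuation_Fld[OF tr_in_Fld] by metis
  with sum show ?thesis
    by (cases "v z \<le> v (\<sigma> z)") (simp_all add: min_def)
qed

text \<open>Usually derived from the uniqueness of extensions of valuations; a parity argument
  with a uniformizer suffices here.\<close>

lemma valuation_conj [simp]: "v (\<sigma> x) = v x"
proof (rule ccontr)
  assume differs: "v (\<sigma> x) \<noteq> v x"
  then have "x \<noteq> 0" by auto
  obtain p where p: "p \<noteq> 0" "v p = 1"
    using uniformizer_exists .
  have "v (\<sigma> p) = v p"
    using even_valuation_if_conj_valuation_differs[OF p(1)] p(2) by fastforce
  then have "v (\<sigma> (p * x)) \<noteq> v (p * x)"
    using differs p \<open>x \<noteq> 0\<close> by (simp add: conj_mult valuation_mult)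
  then have "even (v (p * x))"
    using even_valuation_if_conj_valuation_differs p \<open>x \<noteq> 0\<close> by simp
  moreover have "even (v x)"
    using even_valuation_if_conj_valuation_differs[OF \<open>x \<noteq> 0\<close> differs] .
  ultimately show False
    using p \<open>x \<noteq> 0\<close> by (simp add: valuation_mult)
qed

lemma conj_in_pL_iff [simp]: "\<sigma> x \<in> pL v k \<longleftrightarrow> x \<in> pL v k"
  by (simp add: pL_def)

lemma valuation_Nm: "x \<noteq> 0 \<Longrightarrow> v (Nm \<sigma> x) = 2 * v x"
  by (simp add: Nm_def valuation_mult)

lemma pF_eq: "pF v \<sigma> m = Fld \<sigma> \<inter> pL v (2 * m)"
  using ramified by (auto simp: pF_def pL_def ram_index_def)

lemma Fld_inter_pL_odd: "Fld \<sigma> \<inter> pL v (2 * m - 1) = pF v \<sigma> m"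
  unfolding pF_eq pL_def using even_valuation_Fld by fastforce

lemma tr_in_pF: "z \<in> pL v (2 * m - 1) \<Longrightarrow> tr \<sigma> z \<in> pF v \<sigma> m"
  using tr_in_Fld[of z] pL_add[of z _ "\<sigma> z"]
  unfolding Fld_inter_pL_odd[symmetric] tr_def by simp

end

locale ramified_additive_character = ramified_extension v \<sigma>
  for v :: "'l::field \<Rightarrow> int" and \<sigma> :: "'l \<Rightarrow> 'l" +
  fixes \<tau> :: "'l \<Rightarrow> complex" and c :: int
  assumes conductor: "add_char_conductor v \<sigma> \<tau> c"
begin

lemma char_add: "a \<in> Fld \<sigma> \<Longrightarrow> b \<in> Fld \<sigma> \<Longrightarrow> \<tau> (a + b) = \<tau> a * \<tau> b"
  using conductor unfolding add_char_conductor_def by blast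

lemma char_trivial_on_pF_iff: "(\<forall>a \<in> pF v \<sigma> m. \<tau> a = 1) \<longleftrightarrow> c \<le> m"
  using conductor unfolding add_char_conductor_def by blast

lemma char_tr_eq_1: "z \<in> pL v (2 * c - 1) \<Longrightarrow> \<tau> (tr \<sigma> z) = 1"
  using char_trivial_on_pF_iff tr_in_pF by blast

lemma valuation_ge_if_char_trivial_on_Nm_multiples:
  assumes "x \<noteq> 0" and trivial: "\<forall>u \<in> pF v \<sigma> n. \<tau> (u * Nm \<sigma> x) = 1"
  shows "c - n \<le> v x"
proof -
  have N: "Nm \<sigma> x \<noteq> 0" "Nm \<sigma> x \<in> Fld \<sigma>" "v (Nm \<sigma> x) = 2 * v x"
    using assms Nm_in_Fld valuation_Nm by (auto simp: Nm_def)
  have "\<tau> a = 1" if a: "a \<in> pF v \<sigma> (n + v x)" for a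
  proof -
    have "a / Nm \<sigma> x \<in> pF v \<sigma> n"
      using a N by (cases "a = 0") (auto simp: pF_eq pL_def Fld_divide valuation_divide)
    then show ?thesis
      using trivial N by fastforce
  qed
  then have "c \<le> n + v x"
    using char_trivial_on_pF_iff by blast
  then show ?thesis
    by simp
qed

lemma fourier_locally_constant:
  assumes supp: "{y. F y \<noteq> 0} \<subseteq> pL v j"
    and close: "x - x' \<in> pL v (2 * c - 1 - j)"
  shows "fourier \<sigma> \<tau> I F x = fourier \<sigma> \<tau> I F x'"
proof -
  have "F y * \<tau> (tr \<sigma> (x * y)) = F y * \<tau> (tr \<sigma> (x' * y))" for y
  proof (cases "F y = 0")
    case False
    have "(x - x') * y \<in> pL v (2 * c - 1)"
      using pL_mult[OF close] supp False by fastforce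
    have "x * y = x' * y + (x - x') * y"
      by (simp add: algebra_simps)
    then have "\<tau> (tr \<sigma> (x * y)) = \<tau> (tr \<sigma> (x' * y) + tr \<sigma> ((x - x') * y))"
      by (simp only: tr_add)
    also have "\<dots> = \<tau> (tr \<sigma> (x' * y)) * \<tau> (tr \<sigma> ((x - x') * y))"
      using char_add tr_in_Fld by blast
    also have "\<dots> = \<tau> (tr \<sigma> (x' * y))"
      using char_tr_eq_1[OF \<open>(x - x') * y \<in> pL v (2 * c - 1)\<close>] by simp
    finally show ?thesis
      by simp
  qed simp
  then show ?thesis
    unfolding fourier_def by presburger
qed

lemma support_subset_if_upper_unipotent_invariant:
  assumes weil: "weil_formulas v \<sigma> \<tau> I \<chi> \<pi>" and \<Psi>: "\<Psi> \<in> S_chi v \<sigma> \<chi>"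
    and invariant: "\<forall>u \<in> pF v \<sigma> n. \<pi> (1, u, 0, 1) \<Psi> = \<Psi>"
  shows "{x. \<Psi> x \<noteq> 0} \<subseteq> pL v (c - n)"
proof
  fix x
  assume "x \<in> {x. \<Psi> x \<noteq> 0}"
  then have "\<Psi> x \<noteq> 0"
    by simp
  have unipotent: "\<forall>u \<in> Fld \<sigma>. \<forall>\<Phi> \<in> S_chi v \<sigma> \<chi>. \<pi> (1, u, 0, 1) \<Phi> = (\<lambda>x. \<tau> (u * Nm \<sigma> x) * \<Phi> x)"
    using weil unfolding weil_formulas_def by (elim conjE)
  have "\<tau> (u * Nm \<sigma> x) = 1" if "u \<in> pF v \<sigma> n" for u
  proof -
    have "u \<in> Fld \<sigma>"
      using that pF_subset_Fld by blast
    then have "\<tau> (u * Nm \<sigma> x) * \<Psi> x = \<pi> (1, u, 0, 1) \<Psi> x"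
      using unipotent \<Psi> by simp
    also have "\<dots> = \<Psi> x"
      using invariant that by simp
    finally show ?thesis
      using \<open>\<Psi> x \<noteq> 0\<close> by simp
  qed
  then show "x \<in> pL v (c - n)"
    using valuation_ge_if_char_trivial_on_Nm_multiples[of x n] by (cases "x = 0") (simp_all add: pL_def)
qed

lemma support_subset_if_Kcong_invariant:
  assumes "weil_formulas v \<sigma> \<tau> I \<chi> \<pi>" "\<Phi> \<in> S_chi v \<sigma> \<chi>"
    and "\<forall>g \<in> Kcong v \<sigma> n. \<pi> g \<Phi> = \<Phi>"
  shows "{x. \<Phi> x \<noteq> 0} \<subseteq> pL v (c - n)"
  using assms upper_unipotent_in_Kcong by (simp add: support_subset_if_upper_unipotent_invariant)

lemma fourier_support_subset_if_Kcong_invariant: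
  assumes weil: "weil_formulas v \<sigma> \<tau> I \<chi> \<pi>" and rep: "irred_rep (Gplus \<sigma>) \<pi> (S_chi v \<sigma> \<chi>)"
    and \<Phi>: "\<Phi> \<in> S_chi v \<sigma> \<chi>" and fixed: "\<forall>g \<in> Kcong v \<sigma> n. \<pi> g \<Phi> = \<Phi>"
  shows "{y. fourier \<sigma> \<tau> I \<Phi> y \<noteq> 0} \<subseteq> pL v (c - n)"
proof -
  obtain \<gamma> where "cmod \<gamma> = 1"
    and "\<forall>\<Psi> \<in> S_chi v \<sigma> \<chi>. \<pi> (0, 1, -1, 0) \<Psi> = (\<lambda>x. \<gamma> * fourier \<sigma> \<tau> I \<Psi> (\<sigma> x))"
    using weil unfolding weil_formulas_def by (elim conjE) blast
  then have "\<gamma> \<noteq> 0" and weyl: "\<pi> (0, 1, - 1, 0) \<Phi> = (\<lambda>x. \<gamma> * fourier \<sigma> \<tau> I \<Phi> (\<sigma> x))"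
    using \<Phi> by auto
  have "{x. \<pi> (0, 1, - 1, 0) \<Phi> x \<noteq> 0} \<subseteq> pL v (c - n)"
    using support_subset_if_upper_unipotent_invariant[OF weil irred_rep_closed[OF rep weyl_in_Gplus \<Phi>]]
      weyl_image_upper_unipotent_invariant[OF rep \<Phi> fixed] by blast
  moreover have "\<sigma> y \<in> {x. \<pi> (0, 1, - 1, 0) \<Phi> x \<noteq> 0}" if "fourier \<sigma> \<tau> I \<Phi> y \<noteq> 0" for y
    using that weyl \<open>\<gamma> \<noteq> 0\<close> by simp
  ultimately show ?thesis
    using conj_in_pL_iff by blast
qed

end

theorem lemma8p4:
  fixes v :: "'l::field \<Rightarrow> int" and \<sigma> :: "'l \<Rightarrow> 'l"
    and \<tau> :: "'l \<Rightarrow> complex" and c :: int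
    and \<chi> :: "'l \<Rightarrow> complex"
    and I :: "('l \<Rightarrow> complex) \<Rightarrow> complex"
    and \<pi> :: "'l mat2 \<Rightarrow> ('l \<Rightarrow> complex) \<Rightarrow> ('l \<Rightarrow> complex)"
    and n :: int and \<Phi> :: "'l \<Rightarrow> complex"
  assumes padic: "padic_field v"
    and p_odd: "v 2 = 0"
    and conj: "quadratic_conj \<sigma>"
    and ram: "ramified v \<sigma>"
    and tau: "add_char_conductor v \<sigma> \<tau> c"
    and chi: "mult_char v \<chi>" "\<not> factors_through_norm \<sigma> \<chi>"
    and haar: "haar_integral v I"
    and selfdual: "\<forall>\<Psi>. schwartz v \<Psi> \<longrightarrow> fourier \<sigma> \<tau> I (fourier \<sigma> \<tau> I \<Psi>) = (\<lambda>x. \<Psi> (- x))"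
    and rep: "irred_rep (Gplus \<sigma>) \<pi> (S_chi v \<sigma> \<chi>)"
    and weil: "weil_formulas v \<sigma> \<tau> I \<chi> \<pi>"
    and n: "1 \<le> n"
    and Phi: "\<Phi> \<in> S_chi v \<sigma> \<chi>"
    and fixed: "\<forall>g \<in> Kcong v \<sigma> n. \<pi> g \<Phi> = \<Phi>"
  shows "{x. \<Phi> x \<noteq> 0} \<subseteq> pL v (c - n) \<and>
         (\<forall>x y. x - y \<in> pL v (c + n - 1) \<longrightarrow> \<Phi> x = \<Phi> y)"
proof -
  interpret ramified_additive_character v \<sigma> \<tau> c
    using padic conj ram tau by unfold_locales (simp_all add: padic_field_def)
  have inversion: "\<Phi> x = fourier \<sigma> \<tau> I (fourier \<sigma> \<tau> I \<Phi>) (- x)" for x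
    using selfdual Phi by (simp add: S_chi_def)
  have "\<Phi> x = \<Phi> y" if "x - y \<in> pL v (c + n - 1)" for x y
  proof -
    have "- x - - y \<in> pL v (2 * c - 1 - (c - n))"
      using pL_uminus[OF that] by (simp add: algebra_simps)
    then show ?thesis
      unfolding inversion[of x] inversion[of y]
      by (rule fourier_locally_constant[OF fourier_support_subset_if_Kcong_invariant[OF weil rep Phi fixed]])
  qed
  then show ?thesis
    using support_subset_if_Kcong_invariant[OF weil Phi fixed] by blast
qed

end
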